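(* If $K$ is a compact line and $(F_i)_{i\in I}$ is a weak*-null family in $\mathrm{NBV}(K)$, then $(F_i)_{i\in I}$ is of type $c_0\ell_1$ over every countable subset of $K$.
   Context: A compact line is a totally ordered set which is compact in its order topology. $\mathrm{NBV}(K)$ is the space of right-continuous real maps of bounded variation on $K$, identified with $C(K)^*$ via $F_\mu(t)=\mu([\min K,t])$. $\lim_{i\in I}a_i=0$ means $\{i:|a_i|\ge\varepsilon\}$ is finite for every $\varepsilon>0$. $(F_i)$ is weak*-null if $\lim_i\int f\,d\mu_i=0$ for all $f\in C(K)$, $\mu_i$ the measure associated to $F_i$. $(F_i)$ is of type $c_0\ell_1$ over $Q\subseteq K$ if $F_i(t)=a_{i,t}+b_{i,t}$ ($i\in I$, $t\in Q$) with $\lim_ia_{i,t}=0$ for each $t\in Q$ and $\sup_i\sum_{t\in Q}|b_{i,t}|<\infty$. *)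

theory Defs
  imports "HOL-Analysis.Analysis"
begin

definition compact_line :: "'k::linorder_topology itself \<Rightarrow> bool" where
  "compact_line _ \<longleftrightarrow> compact (UNIV :: 'k set)"

text \<open>Limit of a family along the cofinite filter as in the paper:
  for every eps > 0 only finitely many entries have absolute value at least eps.\<close>
definition family_null :: "('i \<Rightarrow> real) \<Rightarrow> bool" where
  "family_null a \<longleftrightarrow> (\<forall>e>0. finite {i. e \<le> \<bar>a i\<bar>})"

definition bounded_variation :: "('k::linorder \<Rightarrow> real) \<Rightarrow> bool" where
  "bounded_variation F \<longleftrightarrow>
     (\<exists>C. \<forall>xs. sorted xs \<longrightarrow> (\<Sum>k<length xs - 1. \<bar>F (xs ! Suc k) - F (xs ! k)\<bar>) \<le> C)"

definition NBV :: "('k::linorder_topology \<Rightarrow> real) set" where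
  "NBV = {F. bounded_variation F \<and> (\<forall>t. (F \<longlongrightarrow> F t) (at_right t))}"

definition finite_radon :: "'k::topological_space measure \<Rightarrow> bool" where
  "finite_radon M \<longleftrightarrow> sets M = sets borel \<and> finite_measure M \<and>
     (\<forall>A \<in> sets borel. emeasure M A = (SUP C\<in>{C. compact C \<and> C \<subseteq> A}. emeasure M C))"

text \<open>A signed Radon measure is represented as a pair (mu+, mu-) of finite Radon measures
  (Jordan decomposition); its distribution function is F(t) = mu([min K, t]) = mu({..t}).\<close>
definition dist_fun :: "'k::linorder_topology measure \<times> 'k measure \<Rightarrow> 'k \<Rightarrow> real" where
  "dist_fun \<mu> t = measure (fst \<mu>) {..t} - measure (snd \<mu>) {..t}"

definition sintegral :: "'k::topological_space measure \<times> 'k measure \<Rightarrow> ('k \<Rightarrow> real) \<Rightarrow> real" where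
  "sintegral \<mu> f = integral\<^sup>L (fst \<mu>) f - integral\<^sup>L (snd \<mu>) f"

text \<open>(F_i) weak*-null, mu_i the measure associated to F_i.\<close>
definition weak_star_null :: "('i \<Rightarrow> 'k::linorder_topology measure \<times> 'k measure) \<Rightarrow> bool" where
  "weak_star_null \<mu> \<longleftrightarrow> (\<forall>f::'k \<Rightarrow> real. continuous_on UNIV f \<longrightarrow> family_null (\<lambda>i. sintegral (\<mu> i) f))"

definition type_c0l1 :: "('i \<Rightarrow> 'k \<Rightarrow> real) \<Rightarrow> 'k set \<Rightarrow> bool" where
  "type_c0l1 F Q \<longleftrightarrow> (\<exists>a b :: 'i \<Rightarrow> 'k \<Rightarrow> real.
     (\<forall>i. \<forall>t\<in>Q. F i t = a i t + b i t) \<and>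
     (\<forall>t\<in>Q. family_null (\<lambda>i. a i t)) \<and>
     (\<exists>C. \<forall>i. (\<lambda>t. \<bar>b i t\<bar>) summable_on Q \<and> (\<Sum>\<^sub>\<infinity>t\<in>Q. \<bar>b i t\<bar>) \<le> C))"

end

theory Submission
  imports Defs
begin

(* A weak*-null family of functionals on C(K) is pointwise bounded, so by the uniform
   boundedness principle all mu_i lie in a ball of some radius M.  Fix a finite set T of points.
   Urysohn functions f_t, equal to 1 up to t and to 0 from the next point of T on, are integrated
   to almost 0 by all but finitely many mu_i.  By inner regularity, F_i(t) = mu_i([min K, t]) is
   the integral of a continuous g_t <= f_t that is 1 up to t and drops to 0 just after t, up to a
   small error.  The differences f_t - g_t have pairwise disjoint supports, hence a signed sum of
   them has sup norm at most 1, and so sum_{t in T} |F_i(t)| <= M + 2 for all but finitely many i.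
   For countable Q, the value F_i(t) is put into the c_0 part exactly when this sum is large for
   the set of points of Q enumerated up to t. *)

section \<open>Uniform boundedness\<close>

lemma complete_UNIV_bcontfun:
  "complete (UNIV :: ('a::topological_space \<Rightarrow>\<^sub>C 'b::complete_space) set)"
proof (rule completeI)
  fix f :: "nat \<Rightarrow> ('a, 'b) bcontfun"
  assume "Cauchy f"
  then obtain g where "uniform_limit UNIV f g sequentially"
    using uniformly_convergent_eq_cauchy[of "\<lambda>_. True" f]
    unfolding Cauchy_def uniform_limit_sequentially_iff
    by (metis dist_fun_lt_imp_dist_val_lt)
  from uniform_limit_bcontfunE[OF this sequentially_bot]
  obtain l where "f \<longlonglongrightarrow> l" by metis
  then show "\<exists>l\<in>UNIV. f \<longlonglongrightarrow> l" by blast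
qed

lemma norm_linear_le_if_bounded_on_ball:
  fixes f :: "'a::real_normed_vector \<Rightarrow> 'b::real_normed_vector"
  assumes "linear f" "r > 0" and bounded: "\<And>x. x \<in> ball x0 r \<Longrightarrow> norm (f x) \<le> K"
  shows "norm (f y) \<le> (4 * K / r) * norm y"
proof (cases "y = 0")
  case True
  then show ?thesis using linear_0[OF \<open>linear f\<close>] by simp
next
  case False
  define c where "c = r / 2 / norm y"
  have "c > 0" using \<open>r > 0\<close> False by (simp add: c_def)
  have "x0 + c *\<^sub>R y \<in> ball x0 r" using \<open>r > 0\<close> False by (simp add: c_def dist_norm)
  then have "norm (f (x0 + c *\<^sub>R y)) \<le> K" by (rule bounded)
  moreover have "norm (f x0) \<le> K" using \<open>r > 0\<close> by (intro bounded) simp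
  moreover have "f (x0 + c *\<^sub>R y) = f x0 + c *\<^sub>R f y"
    using linear_add[OF \<open>linear f\<close>] linear_scale[OF \<open>linear f\<close>] by simp
  ultimately have "c * norm (f y) \<le> 2 * K"
    using \<open>c > 0\<close> norm_triangle_ineq4[of "f (x0 + c *\<^sub>R y)" "f x0"] by simp
  then have "norm (f y) \<le> 2 * K / c" using \<open>c > 0\<close> by (simp add: field_simps)
  also have "\<dots> = (4 * K / r) * norm y" using \<open>r > 0\<close> False by (simp add: c_def field_simps)
  finally show ?thesis .
qed

lemma uniform_boundedness:
  fixes L :: "'i \<Rightarrow> 'a::real_normed_vector \<Rightarrow> 'b::real_normed_vector"
  assumes complete: "complete (UNIV :: 'a set)"
    and lin: "\<And>i. bounded_linear (L i)"
    and pointwise: "\<And>x. \<exists>B. \<forall>i. norm (L i x) \<le> B"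
  shows "\<exists>M. \<forall>i x. norm (L i x) \<le> M * norm x"
proof -
  define A where "A n = {x. \<forall>i. norm (L i x) \<le> real n}" for n :: nat
  have closed_A: "closed (A n)" for n
  proof -
    have "A n = (\<Inter>i. {x. norm (L i x) \<le> real n})" unfolding A_def by auto
    moreover have "closed {x. norm (L i x) \<le> real n}" for i
      by (intro closed_Collect_le continuous_intros linear_continuous_on lin)
    ultimately show ?thesis by auto
  qed
  have "x \<in> (\<Union>n. A n)" for x
  proof -
    obtain B where "\<forall>i. norm (L i x) \<le> B" using pointwise by blast
    then have "x \<in> A (nat \<lceil>B\<rceil>)"
      unfolding A_def by (auto intro: order_trans[OF _ real_nat_ceiling_ge])
    then show ?thesis by blast
  qed
  then have "(\<Union>n. A n) = UNIV" by blast
  have "\<exists>n. interior (A n) \<noteq> {}"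
  proof (rule ccontr)
    assume "\<not> ?thesis"
    then have "Met_TC.mtopology interior_of \<Union>(range A) = {}"
      by (intro Met_TC.metric_Baire_category_alt) (auto simp: complete closed_A)
    with \<open>(\<Union>n. A n) = UNIV\<close> show False by simp
  qed
  then obtain n x0 r where "r > 0" "ball x0 r \<subseteq> A n"
    by (metis equals0I mem_interior)
  then have "norm (L i y) \<le> (4 * real n / r) * norm y" for i y
    by (intro norm_linear_le_if_bounded_on_ball[OF bounded_linear.linear[OF lin]]) (auto simp: A_def)
  then show ?thesis by blast
qed

lemma family_null_imp_bounded:
  assumes "family_null a"
  shows "\<exists>B. \<forall>i. \<bar>a i\<bar> \<le> B"
proof -
  define S where "S = {i. 1 \<le> \<bar>a i\<bar>}"
  have "finite S"
    using assms unfolding family_null_def S_def by simp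
  then have "\<bar>a i\<bar> \<le> Max (insert 1 ((\<lambda>j. \<bar>a j\<bar>) ` S))" for i
    by (cases "i \<in> S") (auto simp: S_def Max_ge_iff)
  then show ?thesis by blast
qed

section \<open>Cutoff functions\<close>

definition cutoff_fun :: "'a::topological_space set \<Rightarrow> 'a set \<Rightarrow> ('a \<Rightarrow> real) \<Rightarrow> bool" where
  "cutoff_fun A B g \<longleftrightarrow> continuous_on UNIV g \<and> (\<forall>x. 0 \<le> g x \<and> g x \<le> 1) \<and>
     (\<forall>x\<in>A. g x = 1) \<and> (\<forall>x\<in>B. g x = 0)"

lemma cutoff_fun_exists:
  fixes A B :: "'a::t2_space set"
  assumes "compact (UNIV :: 'a set)" "closed A" "closed B" "A \<inter> B = {}"
  obtains g where "cutoff_fun A B g"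
proof -
  have "Hausdorff_space (euclidean :: 'a topology)"
    unfolding Hausdorff_space_def using separation_t2 by (auto simp: disjnt_def)
  moreover have "compact_space (euclidean :: 'a topology)"
    using assms(1) by (simp add: compact_space_def)
  ultimately have "normal_space (euclidean :: 'a topology)"
    using compact_Hausdorff_or_regular_imp_normal_space by blast
  then obtain g where g: "continuous_map euclidean (top_of_set {0..1::real}) g"
      "g ` B \<subseteq> {0}" "g ` A \<subseteq> {1}"
    by (rule Urysohn_lemma[of _ B A 0 1]) (use assms in \<open>auto simp: disjnt_def\<close>)
  then have "continuous_on UNIV g" "\<And>x. g x \<in> {0..1}"
    by (auto simp: continuous_map_in_subtopology)
  with g(2,3) show ?thesis
    by (intro that) (auto simp: cutoff_fun_def image_subset_iff)
qed

lemma cutoff_fun_antimono: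
  "cutoff_fun A B g \<Longrightarrow> A' \<subseteq> A \<Longrightarrow> B' \<subseteq> B \<Longrightarrow> cutoff_fun A' B' g"
  unfolding cutoff_fun_def by blast

lemma cutoff_fun_min:
  assumes "cutoff_fun A B f" "cutoff_fun A C g"
  shows "cutoff_fun A (B \<union> C) (\<lambda>x. min (f x) (g x))"
proof -
  have "continuous_on UNIV (\<lambda>x. min (f x) (g x))"
    using assms unfolding cutoff_fun_def by (intro continuous_intros) auto
  with assms show ?thesis unfolding cutoff_fun_def by (auto simp: min_def intro: antisym)
qed

lemma cutoff_fun_diff_disjoint_supports:
  fixes f g :: "'k::linorder_topology \<Rightarrow> 'k \<Rightarrow> real"
  assumes f: "\<And>t. t \<in> T \<Longrightarrow> cutoff_fun {..t} (\<Union>u\<in>{u\<in>T. t < u}. {u..}) (f t)"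
    and g: "\<And>t. t \<in> T \<Longrightarrow> cutoff_fun {..t} (\<Union>u\<in>{u\<in>T. t < u}. {u..}) (g t)"
    and "t \<in> T" "t' \<in> T" "f t x \<noteq> g t x" "f t' x \<noteq> g t' x"
  shows "t = t'"
proof -
  have equal: "f s x = g s x" if "s \<in> T" "x \<le> s \<or> (\<exists>u\<in>T. s < u \<and> u \<le> x)" for s
    using f[OF that(1)] g[OF that(1)] that(2) unfolding cutoff_fun_def by auto
  have False if "s \<in> T" "s' \<in> T" "s < s'" "f s x \<noteq> g s x" "f s' x \<noteq> g s' x" for s s'
    using equal[of s] equal[of s'] that by (cases "x \<le> s'") (auto simp: not_le intro: less_imp_le)
  then show ?thesis using assms(3-6) by (meson linorder_neqE)
qed

lemma cutoff_funs_up_to_successors: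
  fixes T :: "'k::linorder_topology set"
  assumes "compact (UNIV :: 'k set)" "finite T"
  obtains f where "\<And>t. cutoff_fun {..t} (\<Union>u\<in>{u\<in>T. t < u}. {u..}) (f t)"
proof -
  have "\<exists>f. cutoff_fun {..t} (\<Union>u\<in>{u\<in>T. t < u}. {u..}) f" for t
  proof -
    obtain f where "cutoff_fun {..t} (\<Union>u\<in>{u\<in>T. t < u}. {u..}) f"
      by (rule cutoff_fun_exists[OF assms(1), of "{..t}" "\<Union>u\<in>{u\<in>T. t < u}. {u..}"])
        (use assms(2) in \<open>auto intro!: closed_UN\<close>)
    then show ?thesis by blast
  qed
  then show ?thesis using that by metis
qed

lemma finite_radonD:
  assumes "finite_radon \<nu>"
  shows "finite_measure \<nu>" "sets \<nu> = sets borel" "space \<nu> = UNIV"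
  using assms unfolding finite_radon_def by (auto dest: sets_eq_imp_space_eq)

lemma integrable_finite_radon_continuous:
  fixes f :: "'a::topological_space \<Rightarrow> real"
  assumes "finite_radon \<nu>" "compact (UNIV :: 'a set)" "continuous_on UNIV f"
  shows "integrable \<nu> f"
proof -
  interpret finite_measure \<nu> using finite_radonD(1)[OF assms(1)] .
  obtain B where "\<forall>y\<in>range f. norm y \<le> B"
    using compact_continuous_image[OF assms(3,2)] compact_imp_bounded bounded_iff by metis
  moreover have "f \<in> borel_measurable \<nu>"
    using borel_measurable_continuous_onI[OF assms(3)] finite_radonD(2)[OF assms(1)]
      measurable_cong_sets by blast
  ultimately show ?thesis by (intro integrable_const_bound[where B=B]) auto
qed

lemma finite_radon_small_interval_right:
  fixes t u :: "'k::linorder_topology"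
  assumes fr: "finite_radon \<nu>" and "t < u" "e > 0"
  obtains c where "t < c" "measure \<nu> {t<..<c} < e"
proof -
  interpret finite_measure \<nu> using finite_radonD(1)[OF fr] .
  have sets: "A \<in> sets \<nu>" if "A \<in> sets borel" for A using that finite_radonD(2)[OF fr] by simp
  show ?thesis
  proof (cases "measure \<nu> {t<..} < e")
    case True
    have "measure \<nu> {t<..<u} \<le> measure \<nu> {t<..}"
      by (rule finite_measure_mono) (auto intro: sets)
    with True \<open>t < u\<close> show ?thesis using that by fastforce
  next
    case False
    \<comment> \<open>A compact C inside {t<..} carrying all but e of its mass; the gap between t and min C is small.\<close>
    have "emeasure \<nu> {t<..} = (SUP C\<in>{C. compact C \<and> C \<subseteq> {t<..}}. emeasure \<nu> C)"
      using fr unfolding finite_radon_def by simp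
    moreover have "ennreal (measure \<nu> {t<..} - e) < emeasure \<nu> {t<..}"
      using \<open>e > 0\<close> False by (simp add: emeasure_eq_measure ennreal_lessI)
    ultimately obtain C where C: "compact C" "C \<subseteq> {t<..}"
        "ennreal (measure \<nu> {t<..} - e) < emeasure \<nu> C"
      by (metis (no_types, lifting) less_SUP_iff mem_Collect_eq)
    have C_sets: "C \<in> sets \<nu>" using C(1) by (intro sets) (simp add: compact_imp_closed)
    have A_sets: "{t<..} \<in> sets \<nu>" by (intro sets) simp
    have less: "measure \<nu> {t<..} - e < measure \<nu> C"
      using C(3) False \<open>e > 0\<close> by (simp add: emeasure_eq_measure ennreal_less_iff)
    then have "C \<noteq> {}" using False by auto
    then obtain c where c: "c \<in> C" "\<forall>y\<in>C. c \<le> y" using compact_attains_inf[OF C(1)] by blast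
    have "measure \<nu> {t<..<c} \<le> measure \<nu> ({t<..} - C)"
      using c A_sets C_sets by (intro finite_measure_mono) force+
    also have "\<dots> = measure \<nu> {t<..} - measure \<nu> C"
      using C(2) A_sets C_sets by (intro finite_measure_Diff)
    finally show ?thesis using that c C(2) less by force
  qed
qed

lemma integral_cutoff_fun_approx_measure:
  fixes g :: "'k::linorder_topology \<Rightarrow> real"
  assumes fr: "finite_radon \<nu>" and "compact (UNIV :: 'k set)" and g: "cutoff_fun {..t} {c..} g"
  shows "\<bar>integral\<^sup>L \<nu> g - measure \<nu> {..t}\<bar> \<le> measure \<nu> {t<..<c}"
proof -
  interpret finite_measure \<nu> using finite_radonD(1)[OF fr] .
  have int_g: "integrable \<nu> g"
    using g assms(2) by (intro integrable_finite_radon_continuous[OF fr]) (auto simp: cutoff_fun_def)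
  have int_ind: "integrable \<nu> (indicator A :: 'k \<Rightarrow> real)" if "A \<in> sets borel" for A
    using that finite_radonD(2)[OF fr] by (simp add: emeasure_eq_measure)
  have bounds: "0 \<le> g x - indicator {..t} x \<and> g x - indicator {..t} x \<le> indicator {t<..<c} x" for x
    using g unfolding cutoff_fun_def by (cases "x \<le> t"; cases "c \<le> x") (auto simp: indicator_def not_le)
  have "integral\<^sup>L \<nu> g - measure \<nu> {..t} = integral\<^sup>L \<nu> (\<lambda>x. g x - indicator {..t} x)"
    using int_g int_ind[of "{..t}"] finite_radonD(3)[OF fr] by simp
  moreover have "0 \<le> integral\<^sup>L \<nu> (\<lambda>x. g x - indicator {..t} x)"
    using bounds by (intro integral_nonneg_AE) auto
  moreover have "integral\<^sup>L \<nu> (\<lambda>x. g x - indicator {..t} x) \<le> integral\<^sup>L \<nu> (indicator {t<..<c})"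
    using bounds int_g int_ind by (intro integral_mono) auto
  moreover have "integral\<^sup>L \<nu> (indicator {t<..<c}) = measure \<nu> {t<..<c}"
    using finite_radonD(2)[OF fr] by (simp add: emeasure_eq_measure)
  ultimately show ?thesis by simp
qed

lemma abs_sum_disjoint_supports_le_1:
  fixes D :: "'t \<Rightarrow> 'a \<Rightarrow> real"
  assumes "finite T" "\<And>t. t \<in> T \<Longrightarrow> \<bar>c t\<bar> \<le> 1" "\<And>t. t \<in> T \<Longrightarrow> \<bar>D t x\<bar> \<le> 1"
    and disjoint: "\<And>t t'. t \<in> T \<Longrightarrow> t' \<in> T \<Longrightarrow> D t x \<noteq> 0 \<Longrightarrow> D t' x \<noteq> 0 \<Longrightarrow> t = t'"
  shows "\<bar>\<Sum>t\<in>T. c t * D t x\<bar> \<le> 1"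
proof (cases "\<exists>t\<in>T. D t x \<noteq> 0")
  case True
  then obtain t0 where t0: "t0 \<in> T" "D t0 x \<noteq> 0" by blast
  have "(\<Sum>t\<in>T. c t * D t x) = (\<Sum>t\<in>{t0}. c t * D t x)"
    using assms(1) t0 disjoint by (intro sum.mono_neutral_right) auto
  then show ?thesis
    using assms(2,3)[OF t0(1)] by (simp add: abs_mult mult_le_one)
qed simp

context
  fixes \<mu> :: "'a::topological_space measure \<times> 'a measure"
  assumes finite_radon_fst: "finite_radon (fst \<mu>)" and finite_radon_snd: "finite_radon (snd \<mu>)"
    and compact_UNIV: "compact (UNIV :: 'a set)"
begin

lemma integrable_fst_snd:
  fixes f :: "'a \<Rightarrow> real"
  assumes "continuous_on UNIV f"
  shows "integrable (fst \<mu>) f" "integrable (snd \<mu>) f"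
  using integrable_finite_radon_continuous[OF _ compact_UNIV assms]
    finite_radon_fst finite_radon_snd by auto

lemma sintegral_diff:
  assumes "continuous_on UNIV f" "continuous_on UNIV g"
  shows "sintegral \<mu> (\<lambda>x. f x - g x) = sintegral \<mu> f - sintegral \<mu> g"
  using integrable_fst_snd[OF assms(1)] integrable_fst_snd[OF assms(2)]
  unfolding sintegral_def by simp

lemma sintegral_sum:
  assumes "\<And>t. t \<in> T \<Longrightarrow> continuous_on UNIV (h t)"
  shows "sintegral \<mu> (\<lambda>x. \<Sum>t\<in>T. c t * h t x) = (\<Sum>t\<in>T. c t * sintegral \<mu> (h t))"
  using integrable_fst_snd[OF assms]
  by (simp add: sintegral_def Bochner_Integration.integral_sum sum_subtractf right_diff_distrib)

lemma abs_sintegral_le: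
  assumes "continuous_on UNIV h" "\<And>x. \<bar>h x\<bar> \<le> B"
  shows "\<bar>sintegral \<mu> h\<bar> \<le> B * (measure (fst \<mu>) UNIV + measure (snd \<mu>) UNIV)"
proof -
  have "\<bar>integral\<^sup>L \<nu> h\<bar> \<le> B * measure \<nu> UNIV" if "finite_radon \<nu>" "integrable \<nu> h" for \<nu>
  proof -
    interpret finite_measure \<nu> using finite_radonD(1)[OF that(1)] .
    have "\<bar>integral\<^sup>L \<nu> h\<bar> \<le> integral\<^sup>L \<nu> (\<lambda>x. \<bar>h x\<bar>)"
      by (rule integral_abs_bound)
    also have "\<dots> \<le> integral\<^sup>L \<nu> (\<lambda>_. B)"
      using that(2) assms(2) by (intro integral_mono) auto
    finally show ?thesis using finite_radonD(3)[OF that(1)] by (simp add: mult.commute)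
  qed
  then show ?thesis
    using integrable_fst_snd[OF assms(1)] finite_radon_fst finite_radon_snd
    unfolding sintegral_def by (smt (verit) distrib_left)
qed

lemma bounded_linear_sintegral_bcontfun:
  "bounded_linear (\<lambda>g :: 'a \<Rightarrow>\<^sub>C real. sintegral \<mu> (apply_bcontfun g))"
proof (rule bounded_linear_intro)
  show "sintegral \<mu> (apply_bcontfun (f + g)) = sintegral \<mu> (apply_bcontfun f) + sintegral \<mu> (apply_bcontfun g)"
    for f g :: "'a \<Rightarrow>\<^sub>C real"
    using integrable_fst_snd[OF continuous_on_apply_bcontfun[of UNIV f]]
      integrable_fst_snd[OF continuous_on_apply_bcontfun[of UNIV g]]
    by (simp add: sintegral_def)
  show "sintegral \<mu> (apply_bcontfun (r *\<^sub>R g)) = r *\<^sub>R sintegral \<mu> (apply_bcontfun g)"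
    for r and g :: "'a \<Rightarrow>\<^sub>C real"
    by (simp add: sintegral_def right_diff_distrib)
  show "norm (sintegral \<mu> (apply_bcontfun g)) \<le>
      norm g * (measure (fst \<mu>) UNIV + measure (snd \<mu>) UNIV)" for g :: "'a \<Rightarrow>\<^sub>C real"
  proof -
    have "\<bar>apply_bcontfun g x\<bar> \<le> norm g" for x
      using norm_bounded[of g x] by simp
    then show ?thesis
      using abs_sintegral_le[OF continuous_on_apply_bcontfun] by simp
  qed
qed

lemma sum_abs_sintegral_disjoint_supports_le:
  fixes D :: "'t \<Rightarrow> 'a \<Rightarrow> real"
  assumes M: "\<And>h. continuous_on UNIV h \<Longrightarrow> (\<forall>x. \<bar>h x\<bar> \<le> 1) \<Longrightarrow> \<bar>sintegral \<mu> h\<bar> \<le> M"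
    and "finite T" and cont: "\<And>t. t \<in> T \<Longrightarrow> continuous_on UNIV (D t)"
    and "\<And>t x. t \<in> T \<Longrightarrow> \<bar>D t x\<bar> \<le> 1"
    and "\<And>t t' x. t \<in> T \<Longrightarrow> t' \<in> T \<Longrightarrow> D t x \<noteq> 0 \<Longrightarrow> D t' x \<noteq> 0 \<Longrightarrow> t = t'"
  shows "(\<Sum>t\<in>T. \<bar>sintegral \<mu> (D t)\<bar>) \<le> M"
proof -
  define s where "s t = sgn (sintegral \<mu> (D t))" for t
  have "(\<Sum>t\<in>T. \<bar>sintegral \<mu> (D t)\<bar>) = sintegral \<mu> (\<lambda>x. \<Sum>t\<in>T. s t * D t x)"
    using sintegral_sum[of T D s] cont by (simp add: s_def abs_sgn mult.commute)
  also have "\<dots> \<le> M"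
  proof -
    have "\<forall>x. \<bar>\<Sum>t\<in>T. s t * D t x\<bar> \<le> 1"
      using assms(2,4,5) by (intro allI abs_sum_disjoint_supports_le_1) (auto simp: s_def abs_sgn_eq)
    moreover have "continuous_on UNIV (\<lambda>x. \<Sum>t\<in>T. s t * D t x)"
      using cont by (intro continuous_intros) auto
    ultimately show ?thesis using abs_le_D1[OF M] by blast
  qed
  finally show ?thesis .
qed

end

lemma weak_star_null_uniformly_bounded:
  fixes \<mu> :: "'i \<Rightarrow> 'k::linorder_topology measure \<times> 'k measure"
  assumes cpt: "compact (UNIV :: 'k set)"
    and fr: "\<And>i. finite_radon (fst (\<mu> i)) \<and> finite_radon (snd (\<mu> i))"
    and "weak_star_null \<mu>"
  obtains M where "\<And>i h. continuous_on UNIV h \<Longrightarrow> (\<forall>x. \<bar>h x\<bar> \<le> 1) \<Longrightarrow> \<bar>sintegral (\<mu> i) h\<bar> \<le> M"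
proof -
  have "\<exists>B. \<forall>i. norm (sintegral (\<mu> i) (apply_bcontfun g)) \<le> B" for g :: "'k \<Rightarrow>\<^sub>C real"
    using \<open>weak_star_null \<mu>\<close> continuous_on_apply_bcontfun[of UNIV g]
    unfolding weak_star_null_def by (simp add: family_null_imp_bounded)
  moreover have "bounded_linear (\<lambda>g. sintegral (\<mu> i) (apply_bcontfun g))" for i
    using fr[of i] by (intro bounded_linear_sintegral_bcontfun[OF _ _ cpt]) auto
  ultimately obtain M where M: "\<And>i g. norm (sintegral (\<mu> i) (apply_bcontfun g)) \<le> M * norm g"
    using uniform_boundedness[OF complete_UNIV_bcontfun,
        of "\<lambda>i g. sintegral (\<mu> i) (apply_bcontfun g)"]
    by blast
  show ?thesis
  proof (rule that)
    fix i and h :: "'k \<Rightarrow> real"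
    assume h: "continuous_on UNIV h" "\<forall>x. \<bar>h x\<bar> \<le> 1"
    then have "h \<in> bcontfun" by (intro bcontfun_normI[where b=1]) auto
    then have "apply_bcontfun (Bcontfun h) = h" by (simp add: Bcontfun_inverse)
    moreover have "norm (Bcontfun h) \<le> 1"
      by (rule norm_bound) (use h \<open>apply_bcontfun (Bcontfun h) = h\<close> in auto)
    ultimately have "\<bar>sintegral (\<mu> i) h\<bar> \<le> M * norm (Bcontfun h)"
      using M[of i "Bcontfun h"] by simp
    also have "\<dots> \<le> \<bar>M\<bar> * 1"
      using \<open>norm (Bcontfun h) \<le> 1\<close> by (intro mult_mono) auto
    finally show "\<bar>sintegral (\<mu> i) h\<bar> \<le> \<bar>M\<bar>" by simp
  qed
qed

section \<open>Distribution functions on a compact line\<close>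

context
  fixes \<mu> :: "'k::linorder_topology measure \<times> 'k measure"
  assumes finite_radon_fst: "finite_radon (fst \<mu>)" and finite_radon_snd: "finite_radon (snd \<mu>)"
    and compact_UNIV: "compact (UNIV :: 'k set)"
begin

lemma dist_fun_approx_cutoff_fun:
  assumes "t < u" "\<delta> > 0"
  obtains c where "t < c"
    "\<And>g. cutoff_fun {..t} {c..} g \<Longrightarrow> \<bar>dist_fun \<mu> t - sintegral \<mu> g\<bar> \<le> \<delta>"
proof -
  obtain c1 where c1: "t < c1" "measure (fst \<mu>) {t<..<c1} < \<delta>/2"
    using finite_radon_small_interval_right[OF finite_radon_fst assms(1) half_gt_zero[OF assms(2)]]
    by blast
  obtain c2 where c2: "t < c2" "measure (snd \<mu>) {t<..<c2} < \<delta>/2"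
    using finite_radon_small_interval_right[OF finite_radon_snd assms(1) half_gt_zero[OF assms(2)]]
    by blast
  define c where "c = min c1 c2"
  have "measure \<nu> {t<..<c} \<le> measure \<nu> {t<..<c'}" if "finite_radon \<nu>" "c \<le> c'" for \<nu> c'
    using that(2)
    by (intro finite_measure.finite_measure_mono[OF finite_radonD(1)[OF that(1)]])
      (auto simp: finite_radonD(2)[OF that(1)])
  moreover have "c \<le> c1" "c \<le> c2" by (simp_all add: c_def)
  ultimately have small: "measure (fst \<mu>) {t<..<c} < \<delta>/2" "measure (snd \<mu>) {t<..<c} < \<delta>/2"
    using c1(2) c2(2) finite_radon_fst finite_radon_snd by (meson order.strict_trans1)+
  show ?thesis
  proof (rule that)
    show "t < c" using c1 c2 by (simp add: c_def)
    fix g assume g: "cutoff_fun {..t} {c..} g"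
    show "\<bar>dist_fun \<mu> t - sintegral \<mu> g\<bar> \<le> \<delta>"
      using integral_cutoff_fun_approx_measure[OF finite_radon_fst compact_UNIV g]
        integral_cutoff_fun_approx_measure[OF finite_radon_snd compact_UNIV g] small
      unfolding dist_fun_def sintegral_def by linarith
  qed
qed

lemma dist_fun_approx_cutoff_fun_below:
  assumes f: "cutoff_fun {..t} B f" and "\<delta> > 0"
  obtains g where "cutoff_fun {..t} B g" "\<And>x. g x \<le> f x" "\<bar>dist_fun \<mu> t - sintegral \<mu> g\<bar> \<le> \<delta>"
proof (cases "\<exists>u. t < u")
  case True
  then obtain u where "t < u" by blast
  obtain c where "t < c" and approx:
      "\<And>g. cutoff_fun {..t} {c..} g \<Longrightarrow> \<bar>dist_fun \<mu> t - sintegral \<mu> g\<bar> \<le> \<delta>"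
    using dist_fun_approx_cutoff_fun[OF \<open>t < u\<close> \<open>\<delta> > 0\<close>] by blast
  obtain h where "cutoff_fun {..t} {c..} h"
    by (rule cutoff_fun_exists[OF compact_UNIV, of "{..t}" "{c..}"]) (use \<open>t < c\<close> in auto)
  define g where "g x = min (f x) (h x)" for x
  have g: "cutoff_fun {..t} (B \<union> {c..}) g"
    unfolding g_def using f \<open>cutoff_fun {..t} {c..} h\<close> by (rule cutoff_fun_min)
  show ?thesis
  proof (rule that)
    show "cutoff_fun {..t} B g" using g by (rule cutoff_fun_antimono) auto
    show "g x \<le> f x" for x by (simp add: g_def)
    show "\<bar>dist_fun \<mu> t - sintegral \<mu> g\<bar> \<le> \<delta>"
      by (intro approx cutoff_fun_antimono[OF g]) auto
  qed
next
  case False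
  then have "f = (\<lambda>_. 1)" and "{..t} = UNIV"
    using f unfolding cutoff_fun_def by (auto simp: not_less)
  then have "dist_fun \<mu> t = sintegral \<mu> f"
    using finite_radonD(3)[OF finite_radon_fst] finite_radonD(3)[OF finite_radon_snd]
    by (simp add: dist_fun_def sintegral_def)
  then show ?thesis using f \<open>\<delta> > 0\<close> by (intro that) auto
qed

lemma sum_abs_dist_fun_le:
  fixes f :: "'k \<Rightarrow> 'k \<Rightarrow> real"
  assumes M: "\<And>h. continuous_on UNIV h \<Longrightarrow> (\<forall>x. \<bar>h x\<bar> \<le> 1) \<Longrightarrow> \<bar>sintegral \<mu> h\<bar> \<le> M"
    and "finite T" and "\<delta> > 0"
    and f: "\<And>t. t \<in> T \<Longrightarrow> cutoff_fun {..t} (\<Union>u\<in>{u\<in>T. t < u}. {u..}) (f t)"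
    and small: "\<And>t. t \<in> T \<Longrightarrow> \<bar>sintegral \<mu> (f t)\<bar> \<le> \<delta>"
  shows "(\<Sum>t\<in>T. \<bar>dist_fun \<mu> t\<bar>) \<le> M + 2 * \<delta> * card T"
proof -
  have "\<exists>g. cutoff_fun {..t} (\<Union>u\<in>{u\<in>T. t < u}. {u..}) g \<and>
      (\<forall>x. g x \<le> f t x) \<and> \<bar>dist_fun \<mu> t - sintegral \<mu> g\<bar> \<le> \<delta>" if "t \<in> T" for t
    using dist_fun_approx_cutoff_fun_below[OF f[OF that] \<open>\<delta> > 0\<close>] by blast
  then obtain g where g: "\<And>t. t \<in> T \<Longrightarrow> cutoff_fun {..t} (\<Union>u\<in>{u\<in>T. t < u}. {u..}) (g t) \<and>
      (\<forall>x. g t x \<le> f t x) \<and> \<bar>dist_fun \<mu> t - sintegral \<mu> (g t)\<bar> \<le> \<delta>"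
    by metis
  define D where "D t x = f t x - g t x" for t x
  have D_cont: "continuous_on UNIV (D t)" if "t \<in> T" for t
    using f[OF that] g[OF that] unfolding D_def cutoff_fun_def by (intro continuous_intros) auto
  have D_bounded: "\<bar>D t x\<bar> \<le> 1" if "t \<in> T" for t x
  proof -
    have "g t x \<le> f t x" "0 \<le> g t x" "f t x \<le> 1"
      using f[OF that] g[OF that] unfolding cutoff_fun_def by auto
    then show ?thesis unfolding D_def by linarith
  qed
  have D_disjoint: "t = t'" if "t \<in> T" "t' \<in> T" "D t x \<noteq> 0" "D t' x \<noteq> 0" for t t' x
    using that g unfolding D_def by (intro cutoff_fun_diff_disjoint_supports[OF f]) auto
  have "(\<Sum>t\<in>T. \<bar>sintegral \<mu> (D t)\<bar>) \<le> M"
    by (rule sum_abs_sintegral_disjoint_supports_le[OF finite_radon_fst finite_radon_snd compact_UNIV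
          M \<open>finite T\<close> D_cont D_bounded D_disjoint])
  moreover have "\<bar>dist_fun \<mu> t\<bar> \<le> 2 * \<delta> + \<bar>sintegral \<mu> (D t)\<bar>" if "t \<in> T" for t
  proof -
    have "sintegral \<mu> (D t) = sintegral \<mu> (f t) - sintegral \<mu> (g t)"
      using sintegral_diff[OF finite_radon_fst finite_radon_snd compact_UNIV, of "f t" "g t"]
        f[OF that] g[OF that]
      unfolding D_def cutoff_fun_def by simp
    then show ?thesis using small[OF that] g[OF that] by linarith
  qed
  then have "(\<Sum>t\<in>T. \<bar>dist_fun \<mu> t\<bar>) \<le> (\<Sum>t\<in>T. 2 * \<delta> + \<bar>sintegral \<mu> (D t)\<bar>)"
    by (rule sum_mono)
  ultimately show ?thesis by (simp add: sum.distrib algebra_simps)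
qed

end

section \<open>Splitting into a null part and a summable part\<close>

lemma finite_large_sums_dist_fun_if_weak_star_null:
  fixes \<mu> :: "'i \<Rightarrow> 'k::linorder_topology measure \<times> 'k measure"
  assumes cpt: "compact (UNIV :: 'k set)"
    and fr: "\<And>i. finite_radon (fst (\<mu> i)) \<and> finite_radon (snd (\<mu> i))"
    and wsn: "weak_star_null \<mu>"
  obtains C where "\<And>T. finite T \<Longrightarrow> finite {i. C < (\<Sum>t\<in>T. \<bar>dist_fun (\<mu> i) t\<bar>)}"
proof -
  obtain M where M: "\<And>i h. continuous_on UNIV h \<Longrightarrow> (\<forall>x. \<bar>h x\<bar> \<le> 1) \<Longrightarrow> \<bar>sintegral (\<mu> i) h\<bar> \<le> M"
    using weak_star_null_uniformly_bounded[OF cpt fr wsn] by blast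
  show ?thesis
  proof (rule that)
    fix T :: "'k set" assume "finite T"
    obtain f where f: "\<And>t. cutoff_fun {..t} (\<Union>u\<in>{u\<in>T. t < u}. {u..}) (f t)"
      using cutoff_funs_up_to_successors[OF cpt \<open>finite T\<close>] by blast
    define \<delta> :: real where "\<delta> = 1 / (real (card T) + 1)"
    have "\<delta> > 0" by (simp add: \<delta>_def)
    have "2 * \<delta> * card T \<le> 2" by (simp add: \<delta>_def field_simps)
    define E where "E = (\<Union>t\<in>T. {i. \<delta> \<le> \<bar>sintegral (\<mu> i) (f t)\<bar>})"
    have "finite {i. \<delta> \<le> \<bar>sintegral (\<mu> i) (f t)\<bar>}" for t
    proof -
      have "continuous_on UNIV (f t)"
        using f[of t] unfolding cutoff_fun_def by blast
      then have "family_null (\<lambda>i. sintegral (\<mu> i) (f t))"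
        using wsn unfolding weak_star_null_def by blast
      then show ?thesis using \<open>\<delta> > 0\<close> unfolding family_null_def by blast
    qed
    then have "finite E" using \<open>finite T\<close> unfolding E_def by blast
    have "(\<Sum>t\<in>T. \<bar>dist_fun (\<mu> i) t\<bar>) \<le> M + 2" if "i \<notin> E" for i
    proof -
      have "\<bar>sintegral (\<mu> i) (f t)\<bar> \<le> \<delta>" if "t \<in> T" for t
        using \<open>i \<notin> E\<close> that unfolding E_def by auto
      then have "(\<Sum>t\<in>T. \<bar>dist_fun (\<mu> i) t\<bar>) \<le> M + 2 * \<delta> * card T"
        using sum_abs_dist_fun_le[OF conjunct1[OF fr[of i]] conjunct2[OF fr[of i]] cpt M
            \<open>finite T\<close> \<open>\<delta> > 0\<close> f] by blast
      then show ?thesis using \<open>2 * \<delta> * card T \<le> 2\<close> by linarith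
    qed
    then have "{i. M + 2 < (\<Sum>t\<in>T. \<bar>dist_fun (\<mu> i) t\<bar>)} \<subseteq> E"
      using not_le by blast
    then show "finite {i. M + 2 < (\<Sum>t\<in>T. \<bar>dist_fun (\<mu> i) t\<bar>)}"
      using \<open>finite E\<close> by (rule finite_subset)
  qed
qed

lemma type_c0l1_if_exceptions_finite:
  fixes F :: "'i \<Rightarrow> 'k \<Rightarrow> real" and E :: "'k \<Rightarrow> 'i set"
  assumes "\<And>t. t \<in> Q \<Longrightarrow> finite (E t)"
    and bounded: "\<And>i S. finite S \<Longrightarrow> S \<subseteq> Q \<Longrightarrow> (\<Sum>t\<in>{t\<in>S. i \<notin> E t}. \<bar>F i t\<bar>) \<le> C"
  shows "type_c0l1 F Q"
proof -
  define a where "a i t = (if i \<in> E t then F i t else 0)" for i t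
  define b where "b i t = (if i \<in> E t then 0 else F i t)" for i t
  have b_sums: "(\<Sum>t\<in>S. \<bar>b i t\<bar>) \<le> C" if "finite S" "S \<subseteq> Q" for S i
  proof -
    have "(\<Sum>t\<in>S. \<bar>b i t\<bar>) = (\<Sum>t\<in>{t\<in>S. i \<notin> E t}. \<bar>F i t\<bar>)"
      unfolding b_def using \<open>finite S\<close> by (intro sum.mono_neutral_cong_right) auto
    then show ?thesis using bounded[OF that] by simp
  qed
  show ?thesis unfolding type_c0l1_def
  proof (intro exI conjI)
    show "\<forall>i. \<forall>t\<in>Q. F i t = a i t + b i t" by (simp add: a_def b_def)
    show "\<forall>t\<in>Q. family_null (\<lambda>i. a i t)"
      unfolding family_null_def a_def using assms(1)
      by (auto elim!: finite_subset[rotated])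
    show "\<forall>i. (\<lambda>t. \<bar>b i t\<bar>) summable_on Q \<and> (\<Sum>\<^sub>\<infinity>t\<in>Q. \<bar>b i t\<bar>) \<le> C"
    proof
      fix i
      have "(\<lambda>t. \<bar>b i t\<bar>) summable_on Q"
        using b_sums by (intro nonneg_bdd_above_summable_on) (auto simp: bdd_above_def)
      with b_sums show "(\<lambda>t. \<bar>b i t\<bar>) summable_on Q \<and> (\<Sum>\<^sub>\<infinity>t\<in>Q. \<bar>b i t\<bar>) \<le> C"
        by (auto intro: infsum_le_finite_sums)
    qed
  qed
qed

lemma type_c0l1_if_finite_large_sums:
  fixes F :: "'i \<Rightarrow> 'k \<Rightarrow> real"
  assumes large: "\<And>T. finite T \<Longrightarrow> finite {i. C < (\<Sum>t\<in>T. \<bar>F i t\<bar>)}" and Q: "countable Q"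
  shows "type_c0l1 F Q"
proof -
  define n where "n = to_nat_on Q"
  define P where "P t = {u\<in>Q. n u \<le> n t}" for t
  define E where "E t = {i. max C 0 < (\<Sum>u\<in>P t. \<bar>F i u\<bar>)}" for t
  have finite_P: "finite (P t)" for t
  proof -
    have "finite (n -` {..n t} \<inter> Q)"
      using inj_on_to_nat_on[OF Q] unfolding n_def by (intro finite_vimage_IntI) auto
    then show ?thesis by (rule finite_subset[rotated]) (auto simp: P_def)
  qed
  show ?thesis
  proof (rule type_c0l1_if_exceptions_finite)
    show "finite (E t)" for t
      using large[OF finite_P[of t]] by (rule finite_subset[rotated]) (auto simp: E_def)
    fix i and S assume "finite S" "S \<subseteq> Q"
    define S' where "S' = {t\<in>S. i \<notin> E t}"
    show "(\<Sum>t\<in>S'. \<bar>F i t\<bar>) \<le> max C 0"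
    proof (cases "S' = {}")
      case False
      have "finite S'" using \<open>finite S\<close> unfolding S'_def by simp
      then have "Max (n ` S') \<in> n ` S'" using False by (intro Max_in) auto
      then obtain t0 where t0: "t0 \<in> S'" "n t0 = Max (n ` S')" by auto
      then have "S' \<subseteq> P t0"
        using \<open>finite S'\<close> \<open>S \<subseteq> Q\<close> unfolding P_def S'_def by auto
      then have "(\<Sum>t\<in>S'. \<bar>F i t\<bar>) \<le> (\<Sum>t\<in>P t0. \<bar>F i t\<bar>)"
        using finite_P by (intro sum_mono2) auto
      also have "\<dots> \<le> max C 0"
        using t0(1) unfolding S'_def E_def by (simp only: mem_Collect_eq not_less)
      finally show ?thesis .
    qed simp
  qed
qed

theorem corollary2p15:
  fixes F :: "'i \<Rightarrow> 'k::linorder_topology \<Rightarrow> real"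
    and \<mu> :: "'i \<Rightarrow> 'k measure \<times> 'k measure"
  assumes "compact_line TYPE('k)"
    and "\<And>i. F i \<in> NBV"
    and "\<And>i. finite_radon (fst (\<mu> i)) \<and> finite_radon (snd (\<mu> i))"
    and "\<And>i. F i = dist_fun (\<mu> i)"
    and "weak_star_null \<mu>"
  shows "\<forall>Q. countable Q \<longrightarrow> type_c0l1 F Q"
proof -
  have "compact (UNIV :: 'k set)"
    using assms(1) unfolding compact_line_def .
  then obtain C where "\<And>T. finite T \<Longrightarrow> finite {i. C < (\<Sum>t\<in>T. \<bar>dist_fun (\<mu> i) t\<bar>)}"
    using finite_large_sums_dist_fun_if_weak_star_null assms(3,5) by metis
  then show ?thesis
    using type_c0l1_if_finite_large_sums[of C F] assms(4) by simp
qed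

end
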